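(* Let $X$ be an infinite first-countable compact Hausdorff space. Then $X$ is a $\Delta$-space if and only if $X$ is countable.
   Context: A topological space $X$ is a $\Delta$-space if for every decreasing sequence $\{D_n:n\in\omega\}$ of subsets of $X$ with $\bigcap_n D_n=\emptyset$ there is a decreasing sequence $\{V_n:n\in\omega\}$ of open subsets of $X$ with $D_n\subseteq V_n$ for all $n$ and $\bigcap_n V_n=\emptyset$. *)

theory Defs
  imports "HOL-Analysis.Analysis"
begin

definition Delta_space :: "'a topology \<Rightarrow> bool" where
  "Delta_space X \<longleftrightarrow>
     (\<forall>D :: nat \<Rightarrow> 'a set.
        (\<forall>n. D n \<subseteq> topspace X) \<and> decseq D \<and> (\<Inter>n. D n) = {} \<longrightarrow>
        (\<exists>V :: nat \<Rightarrow> 'a set. (\<forall>n. openin X (V n)) \<and> decseq V \<and>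
             (\<forall>n. D n \<subseteq> V n) \<and> (\<Inter>n. V n) = {}))"

end

theory Submission
  imports Defs
begin

text \<open>A countable T1 space is a Delta-space: enumerate its points as \<open>e 0, e 1, \<dots>\<close> and
let \<open>V n\<close> omit those among \<open>e 0, \<dots>, e n\<close> that have already left \<open>D n\<close>; finite sets are
closed, and every point is eventually omitted. Conversely, the condensation points of an
uncountable compact Hausdorff space form a nonempty set without isolated points; first
countability lets us shrink it to a countable such set \<open>S\<close>. Removing the points of \<open>S\<close> one
at a time gives a decreasing sequence with empty intersection whose members are all dense
in \<open>S\<close>, so any open supersets \<open>V n\<close> are dense open in the compact Hausdorff space
\<open>closure S\<close>, and by Baire their intersection is not empty.\<close>

lemma countable_imp_Delta_space:
  assumes t1: "t1_space X" and countable: "countable (topspace X)"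
  shows "Delta_space X"
  unfolding Delta_space_def
proof (intro allI impI)
  fix D :: "nat \<Rightarrow> 'a set"
  assume D: "(\<forall>n. D n \<subseteq> topspace X) \<and> decseq D \<and> (\<Inter>n. D n) = {}"
  define e where "e = from_nat_into (topspace X)"
  define R where "R n = {y \<in> topspace X \<inter> e ` {..n}. y \<notin> D n}" for n
  define V where "V n = topspace X - R n" for n
  have R_mono: "R m \<subseteq> R n" if "m \<le> n" for m n
    using D that unfolding R_def decseq_def by (auto; meson le_trans subsetD)
  show "\<exists>V. (\<forall>n. openin X (V n)) \<and> decseq V \<and> (\<forall>n. D n \<subseteq> V n) \<and> (\<Inter>n. V n) = {}"
  proof (intro exI[of _ V] conjI allI)
    fix n
    have "closedin X (R n)"
      using t1 unfolding t1_space_closedin_finite by (auto simp: R_def)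
    then show "openin X (V n)"
      by (simp add: V_def openin_diff)
    show "D n \<subseteq> V n"
      using D by (auto simp: V_def R_def)
  next
    show "decseq V"
      using R_mono by (auto simp: decseq_def V_def)
  next
    show "(\<Inter>n. V n) = {}"
    proof (rule ccontr)
      assume "(\<Inter>n. V n) \<noteq> {}"
      then obtain y where y: "\<And>n. y \<in> V n" by blast
      then have "y \<in> topspace X" by (auto simp: V_def)
      then obtain k where k: "e k = y"
        using from_nat_into_surj[OF countable] e_def by metis
      obtain m where "y \<notin> D m" using D by blast
      then have "y \<notin> D (max k m)"
        using D unfolding decseq_def by (meson max.cobounded2 subsetD)
      then have "y \<in> R (max k m)"
        using k \<open>y \<in> topspace X\<close> by (auto simp: R_def)
      then show False using y[of "max k m"] by (auto simp: V_def)
    qed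
  qed
qed

lemma t1_space_derived_set_of_diff_finite:
  assumes "t1_space X" "finite F"
  shows "X derived_set_of (S - F) = X derived_set_of S"
proof
  have "X derived_set_of S \<subseteq> X derived_set_of ((S - F) \<union> F)"
    by (rule derived_set_of_mono) blast
  also have "\<dots> = X derived_set_of (S - F)"
    unfolding derived_set_of_Un using assms by (simp add: t1_space_derived_set_of_finite)
  finally show "X derived_set_of S \<subseteq> X derived_set_of (S - F)" .
qed (simp add: derived_set_of_mono)

lemma countable_decseq_cofinite_Inter_empty:
  assumes "countable S"
  obtains D :: "nat \<Rightarrow> 'a set" where "decseq D" "(\<Inter>n. D n) = {}"
    "\<And>n. \<exists>F. finite F \<and> D n = S - F"
proof
  define s where "s = from_nat_into S"
  show "decseq (\<lambda>n. S - s ` {..<n})"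
    by (auto simp: decseq_def)
  have "y \<in> s ` {..<Suc (to_nat_on S y)}" if "y \<in> S" for y
    using from_nat_into_to_nat_on[OF assms that] unfolding s_def
    by (metis lessI lessThan_iff rev_image_eqI)
  then show "(\<Inter>n. S - s ` {..<n}) = {}"
    by blast
qed blast

lemma Baire_Inter_relatively_dense_open_nonempty:
  fixes V :: "nat \<Rightarrow> 'a set"
  assumes "compact_space X" "Hausdorff_space X" "S \<noteq> {}" "S \<subseteq> topspace X"
    and open_V: "\<And>n. openin X (V n)" and dense_V: "\<And>n. S \<subseteq> X closure_of (S \<inter> V n)"
  shows "(\<Inter>n. V n) \<noteq> {}"
proof -
  define L where "L = X closure_of S"
  define Y where "Y = subtopology X L"
  have "S \<subseteq> L"
    unfolding L_def using assms(4) by (rule closure_of_subset)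
  have topspace_Y: "topspace Y = L"
    unfolding Y_def L_def by (simp add: Int_absorb1 closure_of_subset_topspace)
  have "compact_space Y" "Hausdorff_space Y"
    using assms(1,2) unfolding Y_def L_def
    by (simp_all add: closedin_compact_space compact_space_subtopology Hausdorff_space_subtopology)
  then have locally_compact_regular: "locally_compact_space Y \<and> regular_space Y"
    using compact_imp_locally_compact_space compact_Hausdorff_imp_regular_space by blast
  have "Y closure_of \<Inter>(range (\<lambda>n. V n \<inter> L)) = topspace Y"
  proof (rule Baire_category)
    show "completely_metrizable_space Y \<or> locally_compact_space Y \<and> regular_space Y"
      using locally_compact_regular by blast
    fix T
    assume "T \<in> range (\<lambda>n. V n \<inter> L)"
    then obtain n where T: "T = V n \<inter> L" by blast
    have "L \<subseteq> X closure_of (S \<inter> V n)"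
      unfolding L_def using dense_V by (rule closure_of_minimal) simp
    also have "\<dots> \<subseteq> X closure_of (L \<inter> T)"
      using \<open>S \<subseteq> L\<close> T by (intro closure_of_mono) blast
    finally have "L \<subseteq> X closure_of (L \<inter> T)" .
    then show "openin Y T \<and> Y closure_of T = topspace Y"
      using open_V closure_of_subset_topspace[of Y]
      unfolding T Y_def topspace_Y[unfolded Y_def] closure_of_subtopology
      by (auto simp: openin_subtopology_Int)
  qed simp
  moreover have "topspace Y \<noteq> {}"
    using topspace_Y \<open>S \<subseteq> L\<close> assms(3) by blast
  ultimately have "\<Inter>(range (\<lambda>n. V n \<inter> L)) \<noteq> {}"
    by (metis closure_of_empty)
  then show ?thesis
    by blast
qed

lemma countable_crowded_imp_not_Delta_space:
  assumes "compact_space X" "Hausdorff_space X"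
    and "S \<noteq> {}" "countable S" and crowded: "S \<subseteq> X derived_set_of S"
  shows "\<not> Delta_space X"
proof
  assume "Delta_space X"
  obtain D where D: "decseq D" "(\<Inter>n. D n) = {}" "\<And>n. \<exists>F. finite F \<and> D n = S - F"
    using countable_decseq_cofinite_Inter_empty[OF \<open>countable S\<close>] by metis
  have S_topspace: "S \<subseteq> topspace X"
    using crowded derived_set_of_subset_topspace by (rule order_trans)
  have "D n \<subseteq> topspace X" for n
    using D(3)[of n] S_topspace by auto
  then have "\<exists>V. (\<forall>n. openin X (V n)) \<and> decseq V \<and> (\<forall>n. D n \<subseteq> V n) \<and> (\<Inter>n. V n) = {}"
    using \<open>Delta_space X\<close> D(1,2) unfolding Delta_space_def by blast
  then obtain V where V: "\<forall>n. openin X (V n)" "\<forall>n. D n \<subseteq> V n" "(\<Inter>n. V n) = {}"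
    by blast
  have "S \<subseteq> X closure_of (S \<inter> V n)" for n
  proof -
    obtain F where "finite F" "D n = S - F"
      using D(3) by blast
    have "S \<subseteq> X derived_set_of (S - F)"
      using crowded t1_space_derived_set_of_diff_finite[OF Hausdorff_imp_t1_space[OF assms(2)]
        \<open>finite F\<close>] by simp
    also have "\<dots> \<subseteq> X derived_set_of (S \<inter> V n)"
      using V(2) \<open>D n = S - F\<close> by (intro derived_set_of_mono) blast
    also have "\<dots> \<subseteq> X closure_of (S \<inter> V n)"
      by (rule derived_set_of_subset_closure_of)
    finally show ?thesis .
  qed
  then have "(\<Inter>n. V n) \<noteq> {}"
    using V(1) by (intro Baire_Inter_relatively_dense_open_nonempty[OF assms(1-3) S_topspace]) auto
  then show False
    using V(3) by blast
qed

definition condensation_points :: "'a topology \<Rightarrow> 'a set" where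
  "condensation_points X = {x \<in> topspace X. \<forall>U. openin X U \<and> x \<in> U \<longrightarrow> uncountable U}"

lemma countable_compactin_disjoint_condensation_points:
  assumes "compactin X Z" "Z \<inter> condensation_points X = {}"
  shows "countable Z"
proof -
  let ?\<U> = "{U. openin X U \<and> countable U}"
  have "z \<in> \<Union>?\<U>" if "z \<in> Z" for z
  proof -
    have "z \<in> topspace X" "z \<notin> condensation_points X"
      using assms that compactin_subset_topspace by blast+
    then show ?thesis
      unfolding condensation_points_def by blast
  qed
  then obtain \<F> where \<F>: "finite \<F>" "\<F> \<subseteq> ?\<U>" "Z \<subseteq> \<Union>\<F>"
    using assms(1) unfolding compactin_def by (metis (no_types, lifting) mem_Collect_eq subsetI)
  have "countable (\<Union>U\<in>\<F>. U)"
    using \<F>(1,2) by (intro countable_UN[OF countable_finite]) auto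
  then show ?thesis
    using \<F>(3) countable_subset by auto
qed

lemma condensation_points_nonempty:
  assumes "compact_space X" "uncountable (topspace X)"
  shows "condensation_points X \<noteq> {}"
proof
  assume "condensation_points X = {}"
  then have "countable (topspace X)"
    using assms(1) unfolding compact_space_def
    by (intro countable_compactin_disjoint_condensation_points) auto
  then show False
    using assms(2) by contradiction
qed

lemma first_countable_t1_singleton_countable_Inter_open:
  assumes "first_countable X" "t1_space X" "x \<in> topspace X"
  obtains \<B> where "countable \<B>" "\<And>B. B \<in> \<B> \<Longrightarrow> openin X B \<and> x \<in> B"
    "topspace X \<inter> \<Inter>\<B> = {x}"
proof -
  from assms(1,3) obtain \<B> where \<B>: "countable \<B>" "\<forall>V\<in>\<B>. openin X V"
    "\<forall>U. openin X U \<and> x \<in> U \<longrightarrow> (\<exists>V\<in>\<B>. x \<in> V \<and> V \<subseteq> U)"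
    unfolding first_countable_def by metis
  let ?\<B>x = "{B \<in> \<B>. x \<in> B}"
  have "y = x" if "y \<in> topspace X" "y \<in> \<Inter>?\<B>x" for y
  proof (rule ccontr)
    assume "y \<noteq> x"
    then have "openin X (topspace X - {y}) \<and> x \<in> topspace X - {y}"
      using assms(2,3) \<open>y \<in> topspace X\<close> by (simp add: closedin_t1_singleton openin_diff)
    then obtain V where "V \<in> ?\<B>x" "V \<subseteq> topspace X - {y}"
      using \<B>(3) by blast
    then show False
      using that(2) by blast
  qed
  then have "topspace X \<inter> \<Inter>?\<B>x = {x}"
    using assms(3) by blast
  moreover have "countable ?\<B>x"
    using \<B>(1) by simp
  ultimately show thesis
    using that \<B>(2) by blast
qed

lemma condensation_points_subset_derived_set_of:
  assumes "compact_space X" "Hausdorff_space X" "first_countable X"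
  shows "condensation_points X \<subseteq> X derived_set_of (condensation_points X)"
proof
  fix x
  assume x: "x \<in> condensation_points X"
  then have "x \<in> topspace X"
    by (simp add: condensation_points_def)
  show "x \<in> X derived_set_of (condensation_points X)"
    unfolding in_derived_set_of
  proof (intro conjI allI impI \<open>x \<in> topspace X\<close>; rule ccontr)
    fix U
    assume U: "x \<in> U \<and> openin X U" and "\<nexists>y. y \<noteq> x \<and> y \<in> condensation_points X \<and> y \<in> U"
    then have U_condensation: "U \<inter> condensation_points X \<subseteq> {x}"
      by blast
    have "neighbourhood_base_of (closedin X) X"
      using assms(1,2)
      by (simp add: compact_Hausdorff_imp_regular_space neighbourhood_base_of_closedin)
    then obtain N C where NC: "openin X N" "closedin X C" "x \<in> N" "N \<subseteq> C" "C \<subseteq> U"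
      using U unfolding neighbourhood_base_of by metis
    obtain \<B> where \<B>: "countable \<B>" "\<And>B. B \<in> \<B> \<Longrightarrow> openin X B \<and> x \<in> B"
      "topspace X \<inter> \<Inter>\<B> = {x}"
      using first_countable_t1_singleton_countable_Inter_open
        assms(2,3) Hausdorff_imp_t1_space \<open>x \<in> topspace X\<close> by metis
    txt \<open>\<open>N - {x}\<close> is covered by the compact sets \<open>C - B\<close>, which miss all condensation points.\<close>
    have "countable (C - B)" if "B \<in> \<B>" for B
    proof (rule countable_compactin_disjoint_condensation_points)
      show "compactin X (C - B)"
        using assms(1) NC(2) \<B>(2)[OF that] by (simp add: closedin_compact_space closedin_diff)
      show "(C - B) \<inter> condensation_points X = {}"
        using U_condensation NC(5) \<B>(2)[OF that] by blast
    qed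
    then have "countable (insert x (\<Union>B\<in>\<B>. C - B))"
      using \<B>(1) by blast
    moreover have "N \<subseteq> insert x (\<Union>B\<in>\<B>. C - B)"
      using NC(2,4) \<B>(3) closedin_subset by fastforce
    ultimately show False
      using x NC(1,3) countable_subset unfolding condensation_points_def by blast
  qed
qed

lemma first_countable_derived_set_of_countable_subset:
  assumes "first_countable X" "x \<in> X derived_set_of P"
  obtains W where "W \<subseteq> P" "countable W" "x \<in> X derived_set_of W"
proof -
  have x: "x \<in> topspace X" "\<And>T. x \<in> T \<Longrightarrow> openin X T \<Longrightarrow> \<exists>y. y \<noteq> x \<and> y \<in> P \<and> y \<in> T"
    using assms(2) unfolding in_derived_set_of by blast+
  from assms(1) x(1) obtain \<B> where \<B>: "countable \<B>" "\<forall>V\<in>\<B>. openin X V"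
    "\<forall>U. openin X U \<and> x \<in> U \<longrightarrow> (\<exists>V\<in>\<B>. x \<in> V \<and> V \<subseteq> U)"
    unfolding first_countable_def by metis
  let ?\<B>x = "{V \<in> \<B>. x \<in> V}"
  define g where "g V = (SOME y. y \<noteq> x \<and> y \<in> P \<and> y \<in> V)" for V
  have g: "g V \<noteq> x \<and> g V \<in> P \<and> g V \<in> V" if "V \<in> ?\<B>x" for V
  proof -
    have "\<exists>y. y \<noteq> x \<and> y \<in> P \<and> y \<in> V"
      using x(2) \<B>(2) that by blast
    then show ?thesis
      unfolding g_def by (rule someI_ex)
  qed
  have "x \<in> X derived_set_of (g ` ?\<B>x)"
    unfolding in_derived_set_of
  proof (intro conjI allI impI x(1))
    fix T
    assume "x \<in> T \<and> openin X T"
    then obtain V where "V \<in> ?\<B>x" "V \<subseteq> T"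
      using \<B>(3) by blast
    then show "\<exists>y. y \<noteq> x \<and> y \<in> g ` ?\<B>x \<and> y \<in> T"
      using g by blast
  qed
  moreover have "g ` ?\<B>x \<subseteq> P" "countable (g ` ?\<B>x)"
    using g \<B>(1) by auto
  ultimately show thesis
    using that by blast
qed

lemma first_countable_countable_crowded_subset:
  assumes "first_countable X" "P \<noteq> {}" "P \<subseteq> X derived_set_of P"
  obtains S where "S \<subseteq> P" "S \<noteq> {}" "countable S" "S \<subseteq> X derived_set_of S"
proof -
  have "\<exists>W. W \<subseteq> P \<and> countable W \<and> x \<in> X derived_set_of W" if "x \<in> P" for x
    by (rule first_countable_derived_set_of_countable_subset[OF assms(1), of x P])
      (use that assms(3) in auto)
  then obtain W where W: "\<And>x. x \<in> P \<Longrightarrow> W x \<subseteq> P \<and> countable (W x) \<and> x \<in> X derived_set_of W x"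
    by metis
  obtain p where "p \<in> P"
    using assms(2) by blast
  define T where "T = rec_nat {p} (\<lambda>_ A. A \<union> \<Union>(W ` A))"
  have T_0: "T 0 = {p}" and T_Suc: "T (Suc n) = T n \<union> \<Union>(W ` T n)" for n
    by (simp_all add: T_def)
  have T: "T n \<subseteq> P \<and> countable (T n)" for n
  proof (induction n)
    case 0
    then show ?case
      using \<open>p \<in> P\<close> by (simp add: T_0)
  next
    case (Suc n)
    then show ?case
      unfolding T_Suc using W by auto
  qed
  show thesis
  proof (rule that[of "\<Union>n. T n"])
    show "(\<Union>n. T n) \<subseteq> P" "countable (\<Union>n. T n)"
      using T by auto
    show "(\<Union>n. T n) \<noteq> {}"
      using T_0 by blast
    show "(\<Union>n. T n) \<subseteq> X derived_set_of (\<Union>n. T n)"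
    proof
      fix x
      assume "x \<in> (\<Union>n. T n)"
      then obtain n where "x \<in> T n" by blast
      then have "x \<in> X derived_set_of W x" "W x \<subseteq> T (Suc n)"
        using W T unfolding T_Suc by auto
      then show "x \<in> X derived_set_of (\<Union>n. T n)"
        using derived_set_of_mono[of "W x" "\<Union>n. T n" X] by blast
    qed
  qed
qed

theorem proposition3p5:
  fixes X :: "'a topology"
  assumes "infinite (topspace X)"
    and "first_countable X"
    and "compact_space X"
    and "Hausdorff_space X"
  shows "Delta_space X \<longleftrightarrow> countable (topspace X)"
proof
  assume Delta: "Delta_space X"
  show "countable (topspace X)"
  proof (rule ccontr)
    assume "uncountable (topspace X)"
    with assms(3) have "condensation_points X \<noteq> {}"
      by (rule condensation_points_nonempty)
    with assms(2) obtain S where "S \<noteq> {}" "countable S" "S \<subseteq> X derived_set_of S"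
      by (rule first_countable_countable_crowded_subset[OF _ _
            condensation_points_subset_derived_set_of[OF assms(3,4,2)]])
    then have "\<not> Delta_space X"
      by (rule countable_crowded_imp_not_Delta_space[OF assms(3,4)])
    then show False
      using Delta by contradiction
  qed
next
  assume "countable (topspace X)"
  then show "Delta_space X"
    using assms(4) by (simp add: Hausdorff_imp_t1_space countable_imp_Delta_space)
qed

end
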